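(* Let $T$ be a rooted tree with $n$ vertices and root $r$, and let $X_n$ be the number of descents $\mathrm{des}(T,w)$ of a labeling $w$ of $T$ chosen uniformly at random among all $n!$ labelings. Then \[\mathbb{E}(X_n)=\frac{n-1}{2}\qquad\text{and}\qquad \mathrm{Var}(X_n)=\frac{2d_r+\sum_{v\in V(T)} d_v^2}{12},\] where $d_v$ denotes the down-degree of the vertex $v$.
   Context: A labeling of a rooted tree $T$ with $n$ vertices is a bijection $w: V(T)\to\{1,\dots,n\}$. A vertex $v$ with parent $u$ is a descent of $(T,w)$ if $w(v)>w(u)$ (the root is never a descent); $\mathrm{des}(T,w)$ is the number of descents. The down-degree of a vertex is its number of children. *)

theory Defs
  imports "HOL-Probability.Probability" "HOL-Library.FuncSet"
begin

text \<open>A rooted tree on the finite vertex set V with root r, given by a parent map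
  par (only meaningful on V - {r}): every non-root vertex has its parent in V, and
  iterating the parent map from any vertex eventually reaches the root.\<close>
definition rooted_tree :: "'a set \<Rightarrow> ('a \<Rightarrow> 'a) \<Rightarrow> 'a \<Rightarrow> bool" where
  "rooted_tree V par r \<longleftrightarrow> finite V \<and> r \<in> V \<and> (\<forall>v\<in>V - {r}. par v \<in> V)
     \<and> (\<forall>v\<in>V. \<exists>k. (par ^^ k) v = r)"

definition labelings :: "'a set \<Rightarrow> ('a \<Rightarrow> nat) set" where
  "labelings V = {w \<in> V \<rightarrow>\<^sub>E {1..card V}. bij_betw w V {1..card V}}"

definition des :: "'a set \<Rightarrow> ('a \<Rightarrow> 'a) \<Rightarrow> 'a \<Rightarrow> ('a \<Rightarrow> nat) \<Rightarrow> nat" where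
  "des V par r w = card {v \<in> V - {r}. w v > w (par v)}"

definition down_degree :: "'a set \<Rightarrow> ('a \<Rightarrow> 'a) \<Rightarrow> 'a \<Rightarrow> 'a \<Rightarrow> nat" where
  "down_degree V par r v = card {u \<in> V - {r}. par u = v}"

end

theory Submission
  imports Defs
begin

text \<open>
  The number of descents is the sum over the non-root vertices v of the indicators
  [w(par v) < w v]. The uniform labeling is invariant under composition with any permutation
  of V, so each relative order of k given vertices is equally likely. Hence every indicator has
  mean 1/2, and the product of the indicators of u and v has mean 1/2, 1/3, 1/6 or 1/4
  according as u = v, u and v are siblings, one is the parent of the other, or the four
  vertices u, par u, v, par v are distinct. Summing over all pairs, the sibling pairs
  contribute the sum of the d_v^2 and the parent-child pairs are counted by n - 1 - d_r.
\<close>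

lemma labelings_finite: "finite V \<Longrightarrow> finite (labelings V)"
  unfolding labelings_def
  by (rule finite_subset[OF _ finite_PiE[of V "\<lambda>_. {1..card V}"]]) auto

lemma labelings_nonempty: "finite V \<Longrightarrow> labelings V \<noteq> {}"
proof -
  assume "finite V"
  then obtain h where h: "bij_betw h V {1..card V}"
    by (metis finite_same_card_bij finite_atLeastAtMost card_atLeastAtMost diff_Suc_1)
  then have "bij_betw (restrict h V) V {1..card V}"
    by simp
  moreover have "restrict h V \<in> V \<rightarrow>\<^sub>E {1..card V}"
    using h by (auto simp: bij_betw_def)
  ultimately show ?thesis
    unfolding labelings_def by blast
qed

lemma labelings_neq:
  "w \<in> labelings V \<Longrightarrow> a \<in> V \<Longrightarrow> b \<in> V \<Longrightarrow> a \<noteq> b \<Longrightarrow> w a \<noteq> w b"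
  unfolding labelings_def by (auto dest: bij_betw_imp_inj_on inj_onD)

lemma labelings_comp_permutes:
  assumes "w \<in> labelings V" "\<sigma> permutes V"
  shows "w \<circ> \<sigma> \<in> labelings V"
proof -
  have "bij_betw (w \<circ> \<sigma>) V {1..card V}"
    using assms(1) bij_betw_trans[OF permutes_imp_bij[OF assms(2)]]
    unfolding labelings_def by blast
  moreover have "w \<circ> \<sigma> \<in> V \<rightarrow>\<^sub>E {1..card V}"
    using assms permutes_in_image[OF assms(2)] permutes_not_in[OF assms(2)]
    by (fastforce simp: labelings_def PiE_def extensional_def)
  ultimately show ?thesis
    by (simp add: labelings_def)
qed

lemma card_labelings_comp_permutes:
  assumes \<sigma>: "\<sigma> permutes V"
  shows "card {w \<in> labelings V. Q (w \<circ> \<sigma>)} = card {w \<in> labelings V. Q w}"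
proof -
  let ?L = "labelings V"
  have inj: "inj (\<lambda>w :: 'a \<Rightarrow> nat. w \<circ> \<sigma>)"
  proof (rule injI)
    fix w w' :: "'a \<Rightarrow> nat"
    assume "w \<circ> \<sigma> = w' \<circ> \<sigma>"
    then have "w \<circ> \<sigma> \<circ> inv \<sigma> = w' \<circ> \<sigma> \<circ> inv \<sigma>"
      by simp
    then show "w = w'"
      by (simp add: comp_assoc permutes_inv_o(1)[OF \<sigma>])
  qed
  have image: "(\<lambda>w. w \<circ> \<sigma>) ` {w \<in> ?L. Q (w \<circ> \<sigma>)} = {w \<in> ?L. Q w}"
  proof
    show "{w \<in> ?L. Q w} \<subseteq> (\<lambda>w. w \<circ> \<sigma>) ` {w \<in> ?L. Q (w \<circ> \<sigma>)}"
    proof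
      fix w assume w: "w \<in> {w \<in> ?L. Q w}"
      have "w \<circ> inv \<sigma> \<circ> \<sigma> = w"
        by (simp add: comp_assoc permutes_inv_o(2)[OF \<sigma>])
      moreover have "w \<circ> inv \<sigma> \<in> ?L"
        using w labelings_comp_permutes[OF _ permutes_inv[OF \<sigma>]] by blast
      ultimately show "w \<in> (\<lambda>w. w \<circ> \<sigma>) ` {w \<in> ?L. Q (w \<circ> \<sigma>)}"
        using w by (intro image_eqI[where x = "w \<circ> inv \<sigma>"]) auto
    qed
  qed (use labelings_comp_permutes[OF _ \<sigma>] in auto)
  show ?thesis
    unfolding image[symmetric] by (rule card_image[OF inj_on_subset[OF inj subset_UNIV], symmetric])
qed

lemma card_labelings_less_invariant:
  assumes V: "finite V" "a \<in> V" "b \<in> V" "a \<noteq> b"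
    and R: "\<And>w. R (w \<circ> Transposition.transpose a b) = R w"
  shows "card {w \<in> labelings V. R w} = 2 * card {w \<in> labelings V. w b < w a \<and> R w}"
proof -
  let ?L = "labelings V"
  let ?up = "{w \<in> ?L. w b < w a \<and> R w}" and ?down = "{w \<in> ?L. w a < w b \<and> R w}"
  have "{w \<in> ?L. R w} = ?up \<union> ?down"
    using labelings_neq[OF _ V(2-4)] by (auto simp: neq_iff)
  moreover have "card ?down = card ?up"
    using card_labelings_comp_permutes[OF permutes_swap_id[OF V(2,3)],
        of "\<lambda>w. w b < w a \<and> R w"] R V(4)
    by (simp add: Transposition.transpose_apply_first Transposition.transpose_apply_second)
  ultimately show ?thesis
    using labelings_finite[OF V(1)] by (simp add: card_Un_disjoint disjoint_iff)
qed

lemma card_labelings_less: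
  assumes "finite V" "a \<in> V" "b \<in> V" "a \<noteq> b"
  shows "card (labelings V) = 2 * card {w \<in> labelings V. w b < w a}"
  using card_labelings_less_invariant[OF assms, of "\<lambda>_. True"] by simp

lemma card_labelings_min3:
  assumes V: "finite V" "a \<in> V" "b \<in> V" "c \<in> V" and "a \<noteq> b" "a \<noteq> c" "b \<noteq> c"
  shows "card (labelings V) = 3 * card {w \<in> labelings V. w a < w b \<and> w a < w c}"
proof -
  let ?L = "labelings V"
  let ?min = "\<lambda>x y z. {w \<in> ?L. w x < w y \<and> w x < w z}"
  have partition: "?L = ?min a b c \<union> ?min b a c \<union> ?min c a b"
  proof (intro equalityI subsetI)
    fix w assume w: "w \<in> ?L"
    then have "w a \<noteq> w b" "w a \<noteq> w c" "w b \<noteq> w c"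
      using labelings_neq assms by metis+
    then show "w \<in> ?min a b c \<union> ?min b a c \<union> ?min c a b"
      using w by auto
  qed auto
  have "card (?min b a c) = card (?min a b c)"
    using card_labelings_comp_permutes[OF permutes_swap_id[OF V(2,3)],
        of "\<lambda>w. w a < w b \<and> w a < w c"] assms
    by (simp add: Transposition.transpose_apply_first Transposition.transpose_apply_second
        Transposition.transpose_apply_other)
  moreover have "card (?min c a b) = card (?min a b c)"
    using card_labelings_comp_permutes[OF permutes_swap_id[OF V(2,4)],
        of "\<lambda>w. w a < w b \<and> w a < w c"] assms
    by (simp add: Transposition.transpose_apply_first Transposition.transpose_apply_second
        Transposition.transpose_apply_other conj_commute)
  moreover have "card ?L = card (?min a b c) + card (?min b a c) + card (?min c a b)"
    using arg_cong[OF partition, of card] labelings_finite[OF V(1)]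
    by (simp add: card_Un_disjoint disjoint_iff)
  ultimately show ?thesis
    by simp
qed

lemma card_labelings_chain3:
  assumes "finite V" "a \<in> V" "b \<in> V" "c \<in> V" and "a \<noteq> b" "a \<noteq> c" "b \<noteq> c"
  shows "card (labelings V) = 6 * card {w \<in> labelings V. w c < w b \<and> w b < w a}"
proof -
  have "card {w \<in> labelings V. w c < w a \<and> w c < w b}
      = 2 * card {w \<in> labelings V. w b < w a \<and> w c < w a \<and> w c < w b}"
    using assms by (intro card_labelings_less_invariant)
      (auto simp: Transposition.transpose_apply_first Transposition.transpose_apply_second
        Transposition.transpose_apply_other)
  moreover have "{w \<in> labelings V. w b < w a \<and> w c < w a \<and> w c < w b}
      = {w \<in> labelings V. w c < w b \<and> w b < w a}"
    by auto
  moreover have "card (labelings V) = 3 * card {w \<in> labelings V. w c < w a \<and> w c < w b}"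
    using assms by (intro card_labelings_min3) auto
  ultimately show ?thesis
    by simp
qed

lemma card_labelings_two_less:
  assumes "finite V" "a \<in> V" "b \<in> V" "c \<in> V" "d \<in> V"
    and "a \<noteq> b" "c \<noteq> d" "a \<noteq> c" "a \<noteq> d" "b \<noteq> c" "b \<noteq> d"
  shows "card (labelings V) = 4 * card {w \<in> labelings V. w b < w a \<and> w d < w c}"
proof -
  have "card {w \<in> labelings V. w d < w c} = 2 * card {w \<in> labelings V. w b < w a \<and> w d < w c}"
    using assms by (intro card_labelings_less_invariant)
      (auto simp: Transposition.transpose_apply_other)
  moreover have "card (labelings V) = 2 * card {w \<in> labelings V. w d < w c}"
    using assms by (intro card_labelings_less) auto
  ultimately show ?thesis
    by simp
qed

lemma rooted_tree_parent_in: "rooted_tree V par r \<Longrightarrow> u \<in> V - {r} \<Longrightarrow> par u \<in> V"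
  unfolding rooted_tree_def by blast

lemma rooted_tree_parent_neq:
  assumes T: "rooted_tree V par r" and u: "u \<in> V - {r}"
  shows "par u \<noteq> u"
proof
  assume "par u = u"
  then have "(par ^^ k) u = u" for k
    by (induction k) auto
  moreover obtain k where "(par ^^ k) u = r"
    using T u unfolding rooted_tree_def by blast
  ultimately show False
    using u by simp
qed

lemma rooted_tree_grandparent_neq:
  assumes T: "rooted_tree V par r" and u: "u \<in> V - {r}" and pu: "par u \<in> V - {r}"
  shows "par (par u) \<noteq> u"
proof
  assume "par (par u) = u"
  then have "(par ^^ k) u \<in> {u, par u}" for k
    by (induction k) auto
  moreover obtain k where "(par ^^ k) u = r"
    using T u unfolding rooted_tree_def by blast
  ultimately have "r \<in> {u, par u}"
    by metis
  then show False
    using u pu by blast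
qed

lemma card_labelings_two_descents:
  assumes T: "rooted_tree V par r" and u: "u \<in> V - {r}" and v: "v \<in> V - {r}"
  shows "12 * real (card {w \<in> labelings V. w (par u) < w u \<and> w (par v) < w v})
    = real (card (labelings V)) * (3 + 2 * of_bool (u = v) + of_bool (par u = par v)
        - of_bool (par u = v) - of_bool (par v = u))"
proof -
  have fin: "finite V"
    using T by (simp add: rooted_tree_def)
  have V: "u \<in> V" "v \<in> V" "par u \<in> V" "par v \<in> V"
    using u v rooted_tree_parent_in[OF T] by auto
  have loops: "par u \<noteq> u" "par v \<noteq> v"
    using u v rooted_tree_parent_neq[OF T] by auto
  consider "u = v" | "u \<noteq> v" "par u = par v" | "par u = v" | "par v = u"
    | "u \<noteq> v" "par u \<noteq> par v" "par u \<noteq> v" "par v \<noteq> u"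
    by blast
  then show ?thesis
  proof cases
    case 1
    then show ?thesis
      using card_labelings_less[OF fin V(1,3) loops(1)[symmetric]] loops by simp
  next
    case 2
    then show ?thesis
      using card_labelings_min3[OF fin V(4,1,2)] loops by (simp add: eq_commute)
  next
    case 3
    then have "par v \<noteq> u"
      using rooted_tree_grandparent_neq[OF T u] v by auto
    then show ?thesis
      using 3 card_labelings_chain3[OF fin V(1,2,4)] loops by (auto simp: conj_commute)
  next
    case 4
    then have "par u \<noteq> v"
      using rooted_tree_grandparent_neq[OF T v] u by auto
    then show ?thesis
      using 4 card_labelings_chain3[OF fin V(2,1,3)] loops by (auto simp: conj_commute)
  next
    case 5
    then show ?thesis
      using card_labelings_two_less[OF fin V(1,3,2,4)] loops by simp
  qed
qed

lemma of_nat_card_filter_eq_sum: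
  "finite A \<Longrightarrow> of_nat (card {x \<in> A. P x}) = (\<Sum>x\<in>A. of_bool (P x) :: 'b :: semiring_1)"
  by (simp add: Collect_conj_eq Int_commute)

lemma down_degree_eq_sum:
  "finite V \<Longrightarrow> real (down_degree V par r p) = (\<Sum>u\<in>V - {r}. of_bool (par u = p))"
  unfolding down_degree_def by (rule of_nat_card_filter_eq_sum) simp

lemma sum_same_parent_eq_sum_down_degree_sq:
  assumes T: "rooted_tree V par r"
  shows "(\<Sum>u\<in>V - {r}. \<Sum>v\<in>V - {r}. of_bool (par u = par v))
    = (\<Sum>p\<in>V. real (down_degree V par r p) ^ 2)"
proof -
  let ?E = "V - {r}"
  have fin: "finite V"
    using T by (simp add: rooted_tree_def)
  have common_parent:
    "(\<Sum>p\<in>V. of_bool (par u = p) * of_bool (par v = p)) = (of_bool (par u = par v) :: real)"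
    if "u \<in> ?E" for u v
  proof -
    have "(\<Sum>p\<in>V. of_bool (par u = p) * of_bool (par v = p))
        = (\<Sum>p\<in>V. if p = par u then of_bool (par v = par u) else (0 :: real))"
      by (intro sum.cong) auto
    then show ?thesis
      using fin rooted_tree_parent_in[OF T that] by (simp add: sum.delta eq_commute)
  qed
  have "(\<Sum>p\<in>V. real (down_degree V par r p) ^ 2)
      = (\<Sum>p\<in>V. \<Sum>u\<in>?E. \<Sum>v\<in>?E. of_bool (par u = p) * of_bool (par v = p))"
    using fin by (simp add: down_degree_eq_sum power2_eq_square sum_product del: sum_of_bool_eq)
  also have "\<dots> = (\<Sum>u\<in>?E. \<Sum>v\<in>?E. \<Sum>p\<in>V. of_bool (par u = p) * of_bool (par v = p))"
    by (simp only: sum.swap[of _ V ?E])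
  also have "\<dots> = (\<Sum>u\<in>?E. \<Sum>v\<in>?E. of_bool (par u = par v))"
    using common_parent by simp
  finally show ?thesis ..
qed

lemma sum_parent_nonroot:
  assumes T: "rooted_tree V par r"
  shows "(\<Sum>u\<in>V - {r}. \<Sum>v\<in>V - {r}. of_bool (par u = v))
    = real (card (V - {r})) - real (down_degree V par r r)"
proof -
  let ?E = "V - {r}"
  have fin: "finite V"
    using T by (simp add: rooted_tree_def)
  have inner: "(\<Sum>v\<in>?E. of_bool (par u = v)) = (1 - of_bool (par u = r) :: real)"
    if "u \<in> ?E" for u
    using fin rooted_tree_parent_in[OF T that] by (simp add: of_bool_def sum.delta)
  then have "(\<Sum>u\<in>?E. \<Sum>v\<in>?E. of_bool (par u = v))
      = (\<Sum>u\<in>?E. 1 - of_bool (par u = r) :: real)"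
    by (rule sum.cong[OF refl])
  also have "\<dots> = real (card ?E) - real (down_degree V par r r)"
    using fin by (simp add: sum_subtractf down_degree_eq_sum del: sum_of_bool_eq)
  finally show ?thesis .
qed

lemma des_eq_sum:
  "finite V \<Longrightarrow> real (des V par r w) = (\<Sum>v\<in>V - {r}. of_bool (w (par v) < w v))"
  unfolding des_def by (rule of_nat_card_filter_eq_sum) simp

lemma sum_labelings_des:
  assumes T: "rooted_tree V par r"
  shows "(\<Sum>w\<in>labelings V. real (des V par r w))
    = real (card (labelings V)) * real (card (V - {r})) / 2"
proof -
  let ?L = "labelings V" and ?E = "V - {r}"
  have fin: "finite V"
    using T by (simp add: rooted_tree_def)
  have descent: "(\<Sum>w\<in>?L. of_bool (w (par v) < w v)) = real (card ?L) / 2" if "v \<in> ?E" for v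
    using card_labelings_less[OF fin _ rooted_tree_parent_in[OF T that]
        rooted_tree_parent_neq[OF T that, symmetric]] that labelings_finite[OF fin]
    by (simp add: of_nat_card_filter_eq_sum[symmetric] del: sum_of_bool_eq)
  have "(\<Sum>w\<in>?L. real (des V par r w)) = (\<Sum>v\<in>?E. \<Sum>w\<in>?L. of_bool (w (par v) < w v))"
    using fin by (simp add: des_eq_sum sum.swap[of _ ?L] del: sum_of_bool_eq)
  also have "\<dots> = (\<Sum>v\<in>?E. real (card ?L) / 2)"
    by (intro sum.cong refl descent)
  also have "\<dots> = real (card ?L) * real (card ?E) / 2"
    by simp
  finally show ?thesis .
qed

lemma sum_labelings_des_sq:
  assumes T: "rooted_tree V par r"
  shows "(\<Sum>w\<in>labelings V. real (des V par r w) ^ 2)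
    = real (card (labelings V)) * (3 * real (card (V - {r})) ^ 2
        + (\<Sum>p\<in>V. real (down_degree V par r p) ^ 2) + 2 * real (down_degree V par r r)) / 12"
proof -
  let ?L = "labelings V" and ?E = "V - {r}" and ?N = "real (card (labelings V))"
  let ?weight = "\<lambda>u v. 3 + 2 * of_bool (u = v) + of_bool (par u = par v)
    - of_bool (par u = v) - of_bool (par v = u) :: real"
  have fin: "finite V"
    using T by (simp add: rooted_tree_def)
  have two_descents: "(\<Sum>w\<in>?L. of_bool (w (par u) < w u) * of_bool (w (par v) < w v))
      = ?N / 12 * ?weight u v" if "u \<in> ?E" "v \<in> ?E" for u v
    using card_labelings_two_descents[OF T that] labelings_finite[OF fin]
    by (simp add: of_bool_conj of_nat_card_filter_eq_sum[symmetric] del: sum_of_bool_eq)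
  have "(\<Sum>w\<in>?L. real (des V par r w) ^ 2)
      = (\<Sum>u\<in>?E. \<Sum>v\<in>?E. \<Sum>w\<in>?L. of_bool (w (par u) < w u) * of_bool (w (par v) < w v))"
    using fin
    by (simp add: des_eq_sum power2_eq_square sum_product sum.swap[of _ ?L] del: sum_of_bool_eq)
  also have "\<dots> = (\<Sum>u\<in>?E. \<Sum>v\<in>?E. ?N / 12 * ?weight u v)"
    by (intro sum.cong refl two_descents)
  also have "\<dots> = ?N / 12 * (\<Sum>u\<in>?E. \<Sum>v\<in>?E. ?weight u v)"
    by (simp add: sum_distrib_left)
  also have "(\<Sum>u\<in>?E. \<Sum>v\<in>?E. ?weight u v)
      = 3 * real (card ?E) ^ 2 + 2 * (\<Sum>u\<in>?E. \<Sum>v\<in>?E. of_bool (u = v))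
        + (\<Sum>u\<in>?E. \<Sum>v\<in>?E. of_bool (par u = par v))
        - (\<Sum>u\<in>?E. \<Sum>v\<in>?E. of_bool (par u = v))
        - (\<Sum>u\<in>?E. \<Sum>v\<in>?E. of_bool (par v = u))"
    by (simp add: sum.distrib sum_subtractf sum_distrib_left power2_eq_square del: sum_of_bool_eq)
  also have "(\<Sum>u\<in>?E. \<Sum>v\<in>?E. of_bool (u = v)) = real (card ?E)"
    using fin by simp
  also have "(\<Sum>u\<in>?E. \<Sum>v\<in>?E. of_bool (par v = u))
      = (\<Sum>u\<in>?E. \<Sum>v\<in>?E. of_bool (par u = v))"
    by (rule sum.swap)
  finally show ?thesis
    using sum_same_parent_eq_sum_down_degree_sq[OF T] sum_parent_nonroot[OF T]
    by (simp add: algebra_simps)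
qed

theorem lemma3p3:
  fixes V :: "'a set" and par :: "'a \<Rightarrow> 'a" and r :: 'a
  assumes "rooted_tree V par r"
  defines "X \<equiv> (\<lambda>w. real (des V par r w))"
    and "P \<equiv> pmf_of_set (labelings V)"
  shows "measure_pmf.expectation P X = (real (card V) - 1) / 2 \<and>
         measure_pmf.variance P X =
           (2 * real (down_degree V par r r) + (\<Sum>v\<in>V. real (down_degree V par r v) ^ 2)) / 12"
proof -
  have fin: "finite V" and root: "r \<in> V"
    using assms(1) by (simp_all add: rooted_tree_def)
  have L: "labelings V \<noteq> {}" "finite (labelings V)"
    using labelings_nonempty labelings_finite fin by auto
  then have N: "real (card (labelings V)) > 0"
    by (simp add: card_gt_0_iff)
  have "card V > 0"
    using fin root by (auto simp: card_gt_0_iff)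
  then have card_E: "real (card (V - {r})) = real (card V) - 1"
    using fin root by (simp add: of_nat_diff Suc_le_eq)
  have mean: "measure_pmf.expectation P X = (real (card V) - 1) / 2"
    using sum_labelings_des[OF assms(1)] N card_E
    by (simp add: P_def X_def integral_pmf_of_set[OF L])
  have second_moment: "measure_pmf.expectation P (\<lambda>w. X w ^ 2)
      = (3 * (real (card V) - 1) ^ 2 + (\<Sum>v\<in>V. real (down_degree V par r v) ^ 2)
         + 2 * real (down_degree V par r r)) / 12"
    using sum_labelings_des_sq[OF assms(1)] N card_E
    by (simp add: P_def X_def integral_pmf_of_set[OF L])
  have "measure_pmf.variance P X
      = measure_pmf.expectation P (\<lambda>w. X w ^ 2) - (measure_pmf.expectation P X) ^ 2"
    by (rule measure_pmf.variance_eq) (simp_all add: P_def integrable_measure_pmf_finite L)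
  also have "\<dots>
      = (2 * real (down_degree V par r r) + (\<Sum>v\<in>V. real (down_degree V par r v) ^ 2)) / 12"
    unfolding mean second_moment by (simp add: field_simps power2_eq_square)
  finally show ?thesis
    using mean by blast
qed

end
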